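(* Let $\mathbf a=(a_1,\dots,a_m)$ and $\mathbf e=(e_1,\dots,e_{m-1})$ be partitions such that $\mathbf a\prec'\mathbf e$ and $\sum_{i=1}^{m-1}e_i\le\sum_{i=1}^m a_i$. Let $\theta=\#\{i: e_i>0\}$ and $\bar\theta=\#\{i: a_i>0\}$. Then $\bar\theta\ge\theta$.
   Context: A partition is a nonincreasing finite sequence of nonnegative integers. 1-step generalized majorization: for nonincreasing integer sequences $\mathbf a=(a_1,\dots,a_m)$ and $\mathbf e=(e_1,\dots,e_{m-1})$, set $e_m=-\infty$ and $h=\min\{i: e_i<a_i\}$; then $\mathbf a\prec'\mathbf e$ means $e_i=a_{i+1}$ for all $h\le i\le m-1$. *)

theory Defs
  imports Main
begin

text \<open>A partition: a nonincreasing finite list of natural numbers.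
  Lists are 0-indexed: a ! i corresponds to a_{i+1} in the paper.\<close>
definition is_partition :: "nat list \<Rightarrow> bool" where
  "is_partition a \<longleftrightarrow> sorted_wrt (\<ge>) a"

text \<open>1-step generalized majorization a \<prec>' e, for a of length m and e of length m-1.
  With the convention e_m = -infinity, the index h = min{i. e_i < a_i} is the least
  0-based index i < m such that either i = m-1 (the position of e_m = -infinity) or
  e ! i < a ! i.\<close>
definition gm_h :: "nat list \<Rightarrow> nat list \<Rightarrow> nat" where
  "gm_h a e = (LEAST i. i < length a \<and> (i = length e \<or> e ! i < a ! i))"

definition gen_maj1 :: "nat list \<Rightarrow> nat list \<Rightarrow> bool" where
  "gen_maj1 a e \<longleftrightarrow> length a = length e + 1 \<and>
     (\<forall>i. gm_h a e \<le> i \<and> i < length e \<longrightarrow> e ! i = a ! (i + 1))"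

end

theory Submission
  imports Defs
begin

text \<open>The positive entries of the partitions a and e form initial segments, of lengths
  k and \<theta>. If k < \<theta>, then a_k = 0 < e_k (0-based). From the switching index h on,
  e_i = a_{i+1}, and a_{k+1} = 0, so k < h; below h we have a_j \<le> e_j, hence
  sum a = (\<Sum>j<k. a_j) \<le> (\<Sum>j<k. e_j) < sum e, contradicting sum e \<le> sum a.\<close>

lemma partition_nth_antimono:
  assumes "is_partition a" "i \<le> j" "j < length a"
  shows "a ! j \<le> a ! i"
  using assms sorted_wrt_nth_less[of "(\<ge>)" a i j]
  unfolding is_partition_def by (cases "i = j") auto

lemma partition_nth_pos_iff:
  assumes "is_partition a" "i < length a"
  shows "0 < a ! i \<longleftrightarrow> i < length (takeWhile ((<) 0) a)"
proof
  assume pos: "0 < a ! i"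
  show "i < length (takeWhile ((<) 0) a)"
  proof (rule ccontr)
    let ?k = "length (takeWhile ((<) 0) a)"
    assume "\<not> i < ?k"
    then have "a ! i \<le> a ! ?k" "a ! ?k = 0"
      using assms partition_nth_antimono[of a ?k i] nth_length_takeWhile[of "(<) 0" a]
      by auto
    with pos show False by simp
  qed
next
  assume "i < length (takeWhile ((<) 0) a)"
  then show "0 < a ! i"
    by (metis nth_mem set_takeWhileD takeWhile_nth)
qed

lemma card_partition_pos:
  assumes "is_partition a"
  shows "card {i. i < length a \<and> 0 < a ! i} = length (takeWhile ((<) 0) a)"
proof -
  have "{i. i < length a \<and> 0 < a ! i} = {..<length (takeWhile ((<) 0) a)}"
    using partition_nth_pos_iff[OF assms] length_takeWhile_le[of "(<) 0" a]
    by fastforce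
  then show ?thesis by simp
qed

lemma nth_le_before_gm_h:
  assumes "j < gm_h a e" "j < length e" "length a = length e + 1"
  shows "a ! j \<le> e ! j"
  using assms not_less_Least[of j "\<lambda>i. i < length a \<and> (i = length e \<or> e ! i < a ! i)"]
  unfolding gm_h_def by auto

lemma sum_list_less_if_prefix_le:
  fixes a e :: "nat list"
  assumes le: "\<And>j. j < k \<Longrightarrow> a ! j \<le> e ! j"
    and zero: "\<And>j. k \<le> j \<Longrightarrow> j < length a \<Longrightarrow> a ! j = 0"
    and "k < length e" "k \<le> length a" "0 < e ! k"
  shows "sum_list a < sum_list e"
proof -
  have "sum_list a = (\<Sum>j<k. a ! j) + (\<Sum>j\<in>{k..<length a}. a ! j)"
    using sum.atLeastLessThan_concat[of 0 k "length a" "(!) a"] \<open>k \<le> length a\<close>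
    by (simp add: sum_list_sum_nth lessThan_atLeast0)
  also have "\<dots> = (\<Sum>j<k. a ! j)"
    using zero by simp
  also have "\<dots> \<le> (\<Sum>j<k. e ! j)"
    using le by (intro sum_mono) simp
  also have "\<dots> < (\<Sum>j<Suc k. e ! j)"
    using \<open>0 < e ! k\<close> by simp
  also have "\<dots> \<le> (\<Sum>j<length e. e ! j)"
    using \<open>k < length e\<close> by (intro sum_mono2) auto
  also have "\<dots> = sum_list e"
    by (simp add: sum_list_sum_nth lessThan_atLeast0)
  finally show ?thesis .
qed

lemma gen_maj1_nth_eq_0:
  assumes maj: "gen_maj1 a e" and sum: "sum_list e \<le> sum_list a"
    and zero: "\<And>j. k \<le> j \<Longrightarrow> j < length a \<Longrightarrow> a ! j = 0"
    and "k < length e"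
  shows "e ! k = 0"
proof (rule ccontr)
  assume pos: "e ! k \<noteq> 0"
  have len: "length a = length e + 1"
    using maj unfolding gen_maj1_def by simp
  have "k < gm_h a e"
  proof (rule ccontr)
    assume "\<not> k < gm_h a e"
    then have "e ! k = a ! (k + 1)"
      using maj \<open>k < length e\<close> unfolding gen_maj1_def by simp
    with zero[of "k + 1"] len \<open>k < length e\<close> pos show False by simp
  qed
  then have "sum_list a < sum_list e"
    using len \<open>k < length e\<close> pos zero
    by (intro sum_list_less_if_prefix_le[of k]) (auto intro: nth_le_before_gm_h)
  with sum show False by simp
qed

theorem lemma5p5:
  fixes a e :: "nat list"
  assumes "is_partition a" and "is_partition e"
    and "length a = length e + 1"
    and "gen_maj1 a e"
    and "sum_list e \<le> sum_list a"
  shows "card {i. i < length a \<and> a ! i > 0} \<ge> card {i. i < length e \<and> e ! i > 0}"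
proof -
  let ?k = "length (takeWhile ((<) 0) a)"
  have "length (takeWhile ((<) 0) e) \<le> ?k"
  proof (rule ccontr)
    assume "\<not> ?thesis"
    then have "?k < length e" "0 < e ! ?k"
      using partition_nth_pos_iff[OF assms(2)] length_takeWhile_le[of "(<) 0" e]
      by (auto simp del: length_takeWhile_le)
    moreover have "a ! j = 0" if "?k \<le> j" "j < length a" for j
      using partition_nth_pos_iff[OF assms(1)] that by fastforce
    ultimately show False
      using gen_maj1_nth_eq_0[OF assms(4,5)] by fastforce
  qed
  then show ?thesis
    using card_partition_pos assms(1,2) by simp
qed

end
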